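(* Let $s_0\ge1$ be an integer and let $f=(f_1,f_2)$ and $g=(g_1,g_2)$ be smooth vector fields on $\mathbb{T}^2$. Then \begin{align*} \Big|\int_{\mathbb{T}^2}\partial^{s_0}(f\cdot\nabla g)\cdot\partial^{s_0}g\,dx\Big| \lesssim\;&\Big(\|\nabla f_1\|_{H^{[\frac{s_0}{2}]+1}}\|\partial_1g\|_{H^{s_0-1}}+\|\nabla f_2\|_{H^{[\frac{s_0}{2}]+1}}\|\partial_2g\|_{H^{s_0-1}}\Big)\|g\|_{\dot H^{s_0}}\\ &+\Big(\|\nabla f_1\|_{H^{s_0-1}}\|\partial_1g\|_{H^{[\frac{s_0}{2}]+2}}+\|\nabla f_2\|_{H^{s_0-1}}\|\partial_2g\|_{H^{[\frac{s_0}{2}]+2}}\Big)\|g\|_{\dot H^{s_0}}\\ &+\|\nabla\cdot f\|_{H^2}\|g\|_{\dot H^{s_0}}^2. \end{align*}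
   Context: $\mathbb{T}^2=[-\pi,\pi]^2$ is the periodic domain. $\partial^{s_0}$ denotes any partial derivative $\partial_1^{\alpha_1}\partial_2^{\alpha_2}$ with $\alpha_1+\alpha_2=s_0$, applied componentwise; $f\cdot\nabla g=f_1\partial_1g+f_2\partial_2g$. $[\cdot]$ is the integer part and $\dot H^{s_0}$ the homogeneous Sobolev seminorm. $A\lesssim B$ means $A\le CB$ with a constant $C$ depending only on $s_0$. *)

theory Defs
  imports "HOL-Analysis.Analysis"
begin

text \<open>Scalar functions on the plane; periodic ones are functions on the torus T^2 = [-pi,pi]^2.\<close>
type_synonym sfun = "real \<times> real \<Rightarrow> real"

definition pd1 :: "sfun \<Rightarrow> sfun" where
  "pd1 u = (\<lambda>(x, y). deriv (\<lambda>t. u (t, y)) x)"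

definition pd2 :: "sfun \<Rightarrow> sfun" where
  "pd2 u = (\<lambda>(x, y). deriv (\<lambda>t. u (x, t)) y)"

fun pdl :: "bool list \<Rightarrow> sfun \<Rightarrow> sfun" where
  "pdl [] u = u"
| "pdl (d # ds) u = (if d then pd1 else pd2) (pdl ds u)"

definition pdm :: "nat \<Rightarrow> nat \<Rightarrow> sfun \<Rightarrow> sfun" where
  "pdm a b u = (pd1 ^^ a) ((pd2 ^^ b) u)"

definition smooth_periodic :: "sfun \<Rightarrow> bool" where
  "smooth_periodic u \<longleftrightarrow>
     (\<forall>ds. pdl ds u differentiable_on UNIV) \<and>
     (\<forall>x y. u (x + 2 * pi, y) = u (x, y) \<and> u (x, y + 2 * pi) = u (x, y))"

definition T2 :: "(real \<times> real) set" where
  "T2 = {-pi..pi} \<times> {-pi..pi}"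

definition L2sq :: "sfun \<Rightarrow> real" where
  "L2sq u = integral T2 (\<lambda>z. (u z)\<^sup>2)"

definition Hsq :: "nat \<Rightarrow> sfun \<Rightarrow> real" where
  "Hsq k u = (\<Sum>(a, b) \<in> {(a, b). a + b \<le> k}. L2sq (pdm a b u))"

definition Hnorm :: "nat \<Rightarrow> sfun \<Rightarrow> real" where
  "Hnorm k u = sqrt (Hsq k u)"

definition Hdotsq :: "nat \<Rightarrow> sfun \<Rightarrow> real" where
  "Hdotsq k u = (\<Sum>(a, b) \<in> {(a, b). a + b = k}. L2sq (pdm a b u))"

definition Hnorm2 :: "nat \<Rightarrow> sfun \<Rightarrow> sfun \<Rightarrow> real" where
  "Hnorm2 k u1 u2 = sqrt (Hsq k u1 + Hsq k u2)"

definition Hdotnorm2 :: "nat \<Rightarrow> sfun \<Rightarrow> sfun \<Rightarrow> real" where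
  "Hdotnorm2 k u1 u2 = sqrt (Hdotsq k u1 + Hdotsq k u2)"

text \<open>Component i of f . grad g, where g_i is that component.\<close>
definition advect :: "sfun \<Rightarrow> sfun \<Rightarrow> sfun \<Rightarrow> sfun" where
  "advect f1 f2 gi = (\<lambda>z. f1 z * pd1 gi z + f2 z * pd2 gi z)"

end

(*
  Apply the Leibniz rule to d^alpha (f . grad g). The term in which every derivative falls on
  grad g is f . grad (d^alpha g); paired with d^alpha g and integrated over the torus it becomes,
  after an integration by parts, -1/2 of the integral of (div f) |d^alpha g|^2, which is bounded
  by the sup norm of div f, hence by its H^2 norm. Every other term carries at least one
  derivative of f; of its two factors, the one receiving at most half of the s0 derivatives is
  estimated in sup norm via the embedding of H^2 into L^infinity (the one-dimensional
  fundamental theorem of calculus applied twice), the other one in L^2. There are fewer than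
  2^s0 such terms.
*)

theory Submission
  imports Defs
begin

section \<open>Partial derivatives along the coordinate axes\<close>

definition pdir :: "bool \<Rightarrow> sfun \<Rightarrow> sfun" where
  "pdir d = (if d then pd1 else pd2)"

definition axis_line :: "bool \<Rightarrow> real \<times> real \<Rightarrow> real \<Rightarrow> real \<times> real" where
  "axis_line d z t = (if d then (t, snd z) else (fst z, t))"

definition axis_coord :: "bool \<Rightarrow> real \<times> real \<Rightarrow> real" where
  "axis_coord d z = (if d then fst z else snd z)"

lemma pdl_Cons_pdir: "pdl (d # ds) u = pdir d (pdl ds u)"
  by (simp add: pdir_def)

declare pdl.simps(2) [simp del]

lemma pdl_append: "pdl (ds @ es) u = pdl ds (pdl es u)"
  by (induction ds) (auto simp: pdl_Cons_pdir)

lemma pdir_eq_deriv: "pdir d u z = deriv (\<lambda>t. u (axis_line d z t)) (axis_coord d z)"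
  by (cases z) (auto simp: pdir_def pd1_def pd2_def axis_line_def axis_coord_def)

lemma axis_line_axis_coord [simp]: "axis_line d z (axis_coord d z) = z"
  by (cases z) (simp add: axis_line_def axis_coord_def)

lemma has_real_derivative_pdir_line:
  assumes "u differentiable (at (axis_line d z t))"
  shows "((\<lambda>s. u (axis_line d z s)) has_real_derivative pdir d u (axis_line d z t)) (at t)"
proof -
  have "axis_line d z differentiable (at t)"
    unfolding axis_line_def by (cases d) (auto intro!: derivative_intros simp: differentiable_def)
  then have "(u \<circ> axis_line d z) differentiable (at t)"
    using assms by (rule differentiable_chain_at)
  moreover have "pdir d u (axis_line d z t) = deriv (\<lambda>s. u (axis_line d z s)) t"
    unfolding pdir_eq_deriv by (simp add: axis_line_def axis_coord_def)
  ultimately show ?thesis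
    by (simp add: DERIV_deriv_iff_real_differentiable o_def)
qed

lemma has_real_derivative_pdir:
  "u differentiable (at z) \<Longrightarrow>
   ((\<lambda>s. u (axis_line d z s)) has_real_derivative pdir d u z) (at (axis_coord d z))"
  using has_real_derivative_pdir_line[of u d z "axis_coord d z"] by simp

lemma has_real_derivative_pd1:
  "u differentiable (at (x, y)) \<Longrightarrow> ((\<lambda>t. u (t, y)) has_real_derivative pd1 u (x, y)) (at x)"
  using has_real_derivative_pdir[of u "(x, y)" True] by (simp add: axis_line_def axis_coord_def pdir_def)

lemma has_real_derivative_pd2:
  "u differentiable (at (x, y)) \<Longrightarrow> ((\<lambda>t. u (x, t)) has_real_derivative pd2 u (x, y)) (at y)"
  using has_real_derivative_pdir[of u "(x, y)" False] by (simp add: axis_line_def axis_coord_def pdir_def)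

lemma differentiable_on_UNIV_at: "u differentiable_on UNIV \<Longrightarrow> u differentiable (at z)"
  by (simp add: differentiable_on_def)

lemma pdir_add:
  assumes "u differentiable_on UNIV" "v differentiable_on UNIV"
  shows "pdir d (\<lambda>z. u z + v z) = (\<lambda>z. pdir d u z + pdir d v z)"
proof
  fix z
  have "((\<lambda>s. u (axis_line d z s) + v (axis_line d z s)) has_real_derivative pdir d u z + pdir d v z)
          (at (axis_coord d z))"
    using assms by (intro DERIV_add has_real_derivative_pdir differentiable_on_UNIV_at)
  then show "pdir d (\<lambda>z. u z + v z) z = pdir d u z + pdir d v z"
    unfolding pdir_eq_deriv[of d "\<lambda>z. u z + v z"] by (rule DERIV_imp_deriv)
qed

lemma pdir_mult:
  assumes "u differentiable_on UNIV" "v differentiable_on UNIV"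
  shows "pdir d (\<lambda>z. u z * v z) = (\<lambda>z. pdir d u z * v z + u z * pdir d v z)"
proof
  fix z
  have "((\<lambda>s. u (axis_line d z s) * v (axis_line d z s)) has_real_derivative pdir d u z * v z + u z * pdir d v z)
          (at (axis_coord d z))"
    using DERIV_mult[OF has_real_derivative_pdir has_real_derivative_pdir,
        OF differentiable_on_UNIV_at differentiable_on_UNIV_at, OF assms]
    by (simp add: mult.commute)
  then show "pdir d (\<lambda>z. u z * v z) z = pdir d u z * v z + u z * pdir d v z"
    unfolding pdir_eq_deriv[of d "\<lambda>z. u z * v z"] by (rule DERIV_imp_deriv)
qed

lemma differentiable_on_sum_list:
  "(\<And>x. x \<in> set xs \<Longrightarrow> F x differentiable_on S) \<Longrightarrow> (\<lambda>z. \<Sum>x\<leftarrow>xs. F x z) differentiable_on S"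
  by (induction xs) (auto intro!: derivative_intros)

lemma pdir_sum_list:
  assumes "\<And>x. x \<in> set xs \<Longrightarrow> F x differentiable_on UNIV"
  shows "pdir d (\<lambda>z. \<Sum>x\<leftarrow>xs. F x z) = (\<lambda>z. \<Sum>x\<leftarrow>xs. pdir d (F x) z)"
  using assms
proof (induction xs)
  case Nil
  show ?case by (simp add: pdir_eq_deriv)
next
  case (Cons x xs)
  then show ?case
    by (simp add: pdir_add differentiable_on_sum_list)
qed

section \<open>Smooth functions and the Leibniz rule\<close>

definition smooth :: "sfun \<Rightarrow> bool" where
  "smooth u \<longleftrightarrow> (\<forall>ds. pdl ds u differentiable_on UNIV)"

lemma smooth_pdl: "smooth u \<Longrightarrow> smooth (pdl ds u)"
  unfolding smooth_def by (metis pdl_append)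

lemma smooth_pdir: "smooth u \<Longrightarrow> smooth (pdir d u)"
  using smooth_pdl[of u "[d]"] by (simp add: pdl_Cons_pdir)

lemma smooth_pd1: "smooth u \<Longrightarrow> smooth (pd1 u)"
  and smooth_pd2: "smooth u \<Longrightarrow> smooth (pd2 u)"
  using smooth_pdir[of u True] smooth_pdir[of u False] by (auto simp: pdir_def)

lemma smooth_differentiable_on: "smooth u \<Longrightarrow> u differentiable_on UNIV"
  unfolding smooth_def by (metis pdl.simps(1))

lemma smooth_differentiable: "smooth u \<Longrightarrow> u differentiable (at z)"
  by (rule differentiable_on_UNIV_at[OF smooth_differentiable_on])

lemma smooth_continuous_on: "smooth u \<Longrightarrow> continuous_on S u"
  using smooth_differentiable_on differentiable_imp_continuous_on continuous_on_subset by blast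

lemma smooth_isCont: "smooth u \<Longrightarrow> isCont u z"
  by (simp add: smooth_differentiable differentiable_imp_continuous_within)

lemma pdl_add:
  assumes "smooth u" "smooth v"
  shows "pdl ds (\<lambda>z. u z + v z) = (\<lambda>z. pdl ds u z + pdl ds v z)"
proof (induction ds)
  case Nil
  show ?case by simp
next
  case (Cons d ds)
  then show ?case
    using assms by (simp add: pdl_Cons_pdir pdir_add smooth_differentiable_on smooth_pdl)
qed

lemma smooth_add: "smooth u \<Longrightarrow> smooth v \<Longrightarrow> smooth (\<lambda>z. u z + v z)"
  unfolding smooth_def using pdl_add[unfolded smooth_def] by simp

text \<open>\<open>leibniz_splits ds\<close> lists the ways \<open>(p, q)\<close> of distributing the derivatives \<open>ds\<close>
  between two factors, \<open>p\<close> to the first and \<open>q\<close> to the second (in order), except the one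
  giving all of them to the second factor.\<close>

fun leibniz_splits :: "bool list \<Rightarrow> (bool list \<times> bool list) list" where
  "leibniz_splits [] = []"
| "leibniz_splits (d # ds) = ([d], ds) #
     map (\<lambda>pq. (fst pq, d # snd pq)) (leibniz_splits ds) @
     map (\<lambda>pq. (d # fst pq, snd pq)) (leibniz_splits ds)"

definition leibniz_term :: "sfun \<Rightarrow> sfun \<Rightarrow> bool list \<times> bool list \<Rightarrow> sfun" where
  "leibniz_term u v pq = (\<lambda>z. pdl (fst pq) u z * pdl (snd pq) v z)"

lemma leibniz_splits_length:
  "pq \<in> set (leibniz_splits ds) \<Longrightarrow> fst pq \<noteq> [] \<and> length (fst pq) + length (snd pq) = length ds"
  by (induction ds arbitrary: pq) auto

lemma length_leibniz_splits: "length (leibniz_splits ds) + 1 = 2 ^ length ds"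
  by (induction ds) auto

lemma leibniz_term_differentiable_on:
  "smooth u \<Longrightarrow> smooth v \<Longrightarrow> leibniz_term u v pq differentiable_on UNIV"
  unfolding leibniz_term_def by (intro differentiable_on_mult smooth_differentiable_on smooth_pdl)

lemma pdl_mult:
  assumes u: "smooth u" and v: "smooth v"
  shows "pdl ds (\<lambda>z. u z * v z) =
    (\<lambda>z. u z * pdl ds v z + (\<Sum>pq\<leftarrow>leibniz_splits ds. leibniz_term u v pq z))"
proof (induction ds)
  case Nil
  show ?case by simp
next
  case (Cons d ds)
  have diff_u: "u differentiable_on UNIV" and diff_v: "pdl ds v differentiable_on UNIV"
    using u v by (auto intro: smooth_differentiable_on smooth_pdl)
  have diff_sum: "(\<lambda>z. \<Sum>pq\<leftarrow>leibniz_splits ds. leibniz_term u v pq z) differentiable_on UNIV"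
    using u v by (intro differentiable_on_sum_list leibniz_term_differentiable_on)
  have pdir_term: "pdir d (leibniz_term u v pq) =
      (\<lambda>z. leibniz_term u v (d # fst pq, snd pq) z + leibniz_term u v (fst pq, d # snd pq) z)" for pq
    using u v unfolding leibniz_term_def
    by (simp add: pdir_mult smooth_differentiable_on smooth_pdl pdl_Cons_pdir)
  have "pdl (d # ds) (\<lambda>z. u z * v z) =
      pdir d (\<lambda>z. u z * pdl ds v z + (\<Sum>pq\<leftarrow>leibniz_splits ds. leibniz_term u v pq z))"
    using Cons by (simp add: pdl_Cons_pdir)
  also have "\<dots> = (\<lambda>z. pdir d u z * pdl ds v z + u z * pdl (d # ds) v z +
      (\<Sum>pq\<leftarrow>leibniz_splits ds. pdir d (leibniz_term u v pq) z))"
    using diff_u diff_v diff_sum u v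
    by (simp add: pdir_add pdir_mult pdir_sum_list leibniz_term_differentiable_on pdl_Cons_pdir)
  also have "\<dots> = (\<lambda>z. u z * pdl (d # ds) v z + (\<Sum>pq\<leftarrow>leibniz_splits (d # ds). leibniz_term u v pq z))"
    unfolding pdir_term
    by (rule ext) (simp add: sum_list_addf o_def leibniz_term_def pdl_Cons_pdir algebra_simps)
  finally show ?case .
qed

lemma smooth_mult: "smooth u \<Longrightarrow> smooth v \<Longrightarrow> smooth (\<lambda>z. u z * v z)"
  unfolding smooth_def[of "\<lambda>z. u z * v z"] pdl_mult
  by (intro allI differentiable_on_add differentiable_on_mult differentiable_on_sum_list
      smooth_differentiable_on smooth_pdl leibniz_term_differentiable_on)

section \<open>Symmetry of mixed partial derivatives\<close>

lemma second_difference_pd2_pd1: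
  assumes u: "smooth u" and h: "h > 0"
  obtains \<xi> \<eta> where "x < \<xi>" "\<xi> < x + h" "y < \<eta>" "\<eta> < y + h"
    "u (x + h, y + h) - u (x + h, y) - u (x, y + h) + u (x, y) = h * h * pd2 (pd1 u) (\<xi>, \<eta>)"
proof -
  have "\<And>s. ((\<lambda>s. u (s, y + h) - u (s, y)) has_real_derivative pd1 u (s, y + h) - pd1 u (s, y)) (at s)"
    using u by (intro DERIV_diff has_real_derivative_pd1 smooth_differentiable)
  then obtain \<xi> where \<xi>: "x < \<xi>" "\<xi> < x + h"
    "u (x + h, y + h) - u (x + h, y) - (u (x, y + h) - u (x, y)) = h * (pd1 u (\<xi>, y + h) - pd1 u (\<xi>, y))"
    using MVT2[of x "x + h"] h by fastforce
  obtain \<eta> where "y < \<eta>" "\<eta> < y + h"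
    "pd1 u (\<xi>, y + h) - pd1 u (\<xi>, y) = h * pd2 (pd1 u) (\<xi>, \<eta>)"
    using MVT2[of y "y + h" "\<lambda>t. pd1 u (\<xi>, t)" "\<lambda>t. pd2 (pd1 u) (\<xi>, t)"] h u
    by (fastforce intro!: has_real_derivative_pd2 smooth_differentiable smooth_pd1)
  with \<xi> that show ?thesis by (simp add: algebra_simps)
qed

lemma second_difference_pd1_pd2:
  assumes u: "smooth u" and h: "h > 0"
  obtains \<xi> \<eta> where "x < \<xi>" "\<xi> < x + h" "y < \<eta>" "\<eta> < y + h"
    "u (x + h, y + h) - u (x + h, y) - u (x, y + h) + u (x, y) = h * h * pd1 (pd2 u) (\<xi>, \<eta>)"
proof -
  have "\<And>t. ((\<lambda>t. u (x + h, t) - u (x, t)) has_real_derivative pd2 u (x + h, t) - pd2 u (x, t)) (at t)"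
    using u by (intro DERIV_diff has_real_derivative_pd2 smooth_differentiable)
  then obtain \<eta> where \<eta>: "y < \<eta>" "\<eta> < y + h"
    "u (x + h, y + h) - u (x, y + h) - (u (x + h, y) - u (x, y)) = h * (pd2 u (x + h, \<eta>) - pd2 u (x, \<eta>))"
    using MVT2[of y "y + h"] h by fastforce
  obtain \<xi> where "x < \<xi>" "\<xi> < x + h"
    "pd2 u (x + h, \<eta>) - pd2 u (x, \<eta>) = h * pd1 (pd2 u) (\<xi>, \<eta>)"
    using MVT2[of x "x + h" "\<lambda>s. pd2 u (s, \<eta>)" "\<lambda>s. pd1 (pd2 u) (s, \<eta>)"] h u
    by (fastforce intro!: has_real_derivative_pd1 smooth_differentiable smooth_pd2)
  with \<eta> that show ?thesis by (simp add: algebra_simps)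
qed

lemma isCont_eq_if_values_meet_nearby:
  fixes A B :: "'a::metric_space \<Rightarrow> real"
  assumes "isCont A z" "isCont B z"
    and meet: "\<And>\<delta>. \<delta> > 0 \<Longrightarrow> \<exists>p q. dist p z < \<delta> \<and> dist q z < \<delta> \<and> A p = B q"
  shows "A z = B z"
proof (rule ccontr)
  assume "A z \<noteq> B z"
  define e where "e = \<bar>A z - B z\<bar> / 2"
  have "e > 0"
    using \<open>A z \<noteq> B z\<close> by (simp add: e_def)
  then obtain \<delta>A \<delta>B where "\<delta>A > 0" and A_near: "\<And>p. dist p z < \<delta>A \<Longrightarrow> \<bar>A p - A z\<bar> < e"
    and "\<delta>B > 0" and B_near: "\<And>q. dist q z < \<delta>B \<Longrightarrow> \<bar>B q - B z\<bar> < e"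
    using assms(1,2) unfolding continuous_at_eps_delta dist_real_def by metis
  then obtain p q where "dist p z < min \<delta>A \<delta>B" "dist q z < min \<delta>A \<delta>B" "A p = B q"
    using meet[of "min \<delta>A \<delta>B"] by auto
  then have "\<bar>A z - B z\<bar> < 2 * e"
    using A_near[of p] B_near[of q] by (simp add: abs_minus_commute abs_diff_less_iff)
  then show False
    by (simp add: e_def)
qed

text \<open>Both mixed derivatives are limits of the same second difference quotient.\<close>

lemma pd1_pd2_commute: "smooth u \<Longrightarrow> pd1 (pd2 u) = pd2 (pd1 u)"
proof (rule ext, clarify)
  fix x y
  assume u: "smooth u"
  show "pd1 (pd2 u) (x, y) = pd2 (pd1 u) (x, y)"
  proof (rule isCont_eq_if_values_meet_nearby[where A = "pd1 (pd2 u)" and B = "pd2 (pd1 u)"])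
    show "isCont (pd1 (pd2 u)) (x, y)" "isCont (pd2 (pd1 u)) (x, y)"
      using u by (simp_all add: smooth_isCont smooth_pd1 smooth_pd2)
    fix \<delta> :: real
    assume "\<delta> > 0"
    define h where "h = \<delta> / 2"
    have "h > 0"
      using \<open>\<delta> > 0\<close> by (simp add: h_def)
    have near: "dist (\<xi>, \<eta>) (x, y) < \<delta>" if "x < \<xi>" "\<xi> < x + h" "y < \<eta>" "\<eta> < y + h" for \<xi> \<eta>
    proof -
      have "dist (\<xi>, \<eta>) (x, y) \<le> \<bar>\<xi> - x\<bar> + \<bar>\<eta> - y\<bar>"
        unfolding dist_Pair_Pair dist_real_def using sqrt_sum_squares_le_sum_abs by simp
      with that show ?thesis
        by (simp add: h_def)
    qed
    obtain \<xi> \<eta> where "x < \<xi>" "\<xi> < x + h" "y < \<eta>" "\<eta> < y + h"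
      and mixed12: "u (x + h, y + h) - u (x + h, y) - u (x, y + h) + u (x, y) = h * h * pd1 (pd2 u) (\<xi>, \<eta>)"
      by (rule second_difference_pd1_pd2[OF u \<open>h > 0\<close>])
    moreover obtain \<xi>' \<eta>' where "x < \<xi>'" "\<xi>' < x + h" "y < \<eta>'" "\<eta>' < y + h"
      and mixed21: "u (x + h, y + h) - u (x + h, y) - u (x, y + h) + u (x, y) = h * h * pd2 (pd1 u) (\<xi>', \<eta>')"
      by (rule second_difference_pd2_pd1[OF u \<open>h > 0\<close>])
    moreover have "pd1 (pd2 u) (\<xi>, \<eta>) = pd2 (pd1 u) (\<xi>', \<eta>')"
      using mixed12 mixed21 \<open>h > 0\<close> by simp
    ultimately show "\<exists>p q. dist p (x, y) < \<delta> \<and> dist q (x, y) < \<delta> \<and> pd1 (pd2 u) p = pd2 (pd1 u) q"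
      using near by blast
  qed
qed

lemma smooth_funpow_pd1: "smooth u \<Longrightarrow> smooth ((pd1 ^^ a) u)"
  by (induction a) (auto intro: smooth_pd1)

lemma smooth_funpow_pd2: "smooth u \<Longrightarrow> smooth ((pd2 ^^ b) u)"
  by (induction b) (auto intro: smooth_pd2)

lemma pd2_funpow_pd1: "smooth u \<Longrightarrow> pd2 ((pd1 ^^ a) u) = (pd1 ^^ a) (pd2 u)"
  by (induction a) (simp_all flip: pd1_pd2_commute add: smooth_funpow_pd1)

lemma pdl_eq_pdm: "smooth u \<Longrightarrow> pdl ds u = pdm (length (filter id ds)) (length (filter Not ds)) u"
proof (induction ds)
  case Nil
  show ?case by (simp add: pdm_def)
next
  case (Cons d ds)
  then show ?case
    by (cases d) (simp_all add: pdl_Cons_pdir pdir_def pdm_def pd2_funpow_pd1 smooth_funpow_pd2)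
qed

lemma pdm_eq_pdl: "smooth u \<Longrightarrow> pdm a b u = pdl (replicate a True @ replicate b False) u"
  by (subst pdl_eq_pdm) auto

lemma smooth_pdm: "smooth u \<Longrightarrow> smooth (pdm a b u)"
  by (simp add: pdm_eq_pdl smooth_pdl)

lemma pdl_pdir_commute: "smooth u \<Longrightarrow> pdl ds (pdir d u) = pdir d (pdl ds u)"
  using pdl_eq_pdm[of u "ds @ [d]"] pdl_eq_pdm[of u "d # ds"]
  by (cases d) (simp_all add: pdl_append pdl_Cons_pdir)

section \<open>Periodic functions and integration over the torus\<close>

definition periodic :: "sfun \<Rightarrow> bool" where
  "periodic u \<longleftrightarrow> (\<forall>x y. u (x + 2 * pi, y) = u (x, y) \<and> u (x, y + 2 * pi) = u (x, y))"

lemma smooth_periodic_iff: "smooth_periodic u \<longleftrightarrow> smooth u \<and> periodic u"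
  by (simp add: smooth_periodic_def smooth_def periodic_def)

lemma periodic_pd1:
  assumes u: "smooth u" and per: "periodic u"
  shows "periodic (pd1 u)"
  unfolding periodic_def
proof (intro allI conjI)
  fix x y
  have "((\<lambda>t. u (t + 2 * pi, y)) has_real_derivative pd1 u (x + 2 * pi, y)) (at x)"
    using has_real_derivative_pd1[OF smooth_differentiable[OF u], where x = "x + 2 * pi" and y = y]
    by (simp add: DERIV_shift)
  then have "((\<lambda>t. u (t, y)) has_real_derivative pd1 u (x + 2 * pi, y)) (at x)"
    using per by (simp add: periodic_def)
  then show "pd1 u (x + 2 * pi, y) = pd1 u (x, y)"
    using has_real_derivative_pd1[OF smooth_differentiable[OF u]] by (rule DERIV_unique)
  show "pd1 u (x, y + 2 * pi) = pd1 u (x, y)"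
    using per by (simp add: periodic_def pd1_def)
qed

lemma periodic_pd2:
  assumes u: "smooth u" and per: "periodic u"
  shows "periodic (pd2 u)"
  unfolding periodic_def
proof (intro allI conjI)
  fix x y
  have "((\<lambda>t. u (x, t + 2 * pi)) has_real_derivative pd2 u (x, y + 2 * pi)) (at y)"
    using has_real_derivative_pd2[OF smooth_differentiable[OF u], where x = x and y = "y + 2 * pi"]
    by (simp add: DERIV_shift)
  then have "((\<lambda>t. u (x, t)) has_real_derivative pd2 u (x, y + 2 * pi)) (at y)"
    using per by (simp add: periodic_def)
  then show "pd2 u (x, y + 2 * pi) = pd2 u (x, y)"
    using has_real_derivative_pd2[OF smooth_differentiable[OF u]] by (rule DERIV_unique)
  show "pd2 u (x + 2 * pi, y) = pd2 u (x, y)"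
    using per by (simp add: periodic_def pd2_def)
qed

lemma periodic_pdl: "smooth u \<Longrightarrow> periodic u \<Longrightarrow> periodic (pdl ds u)"
  by (induction ds)
     (auto simp: pdl_Cons_pdir pdir_def intro: periodic_pd1 periodic_pd2 smooth_pdl)

lemma periodic_mult: "periodic u \<Longrightarrow> periodic v \<Longrightarrow> periodic (\<lambda>z. u z * v z)"
  by (simp add: periodic_def)

lemma T2_eq_cbox: "T2 = cbox (-pi, -pi) (pi, pi)"
  by (simp add: T2_def cbox_Pair_eq)

lemma integrable_on_T2: "continuous_on T2 (f :: sfun) \<Longrightarrow> f integrable_on T2"
  unfolding T2_eq_cbox by (rule integrable_continuous)

lemma integral_T2_iterated:
  fixes F :: sfun
  assumes "continuous_on T2 F"
  shows "integral T2 F = integral {-pi..pi} (\<lambda>x. integral {-pi..pi} (\<lambda>y. F (x, y)))"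
    and "integral T2 F = integral {-pi..pi} (\<lambda>y. integral {-pi..pi} (\<lambda>x. F (x, y)))"
proof -
  have F: "continuous_on (cbox (-pi, -pi) (pi, pi)) F"
    using assms by (simp add: T2_eq_cbox)
  show "integral T2 F = integral {-pi..pi} (\<lambda>x. integral {-pi..pi} (\<lambda>y. F (x, y)))"
    using integral_prod_continuous[OF F] by (simp add: T2_eq_cbox)
  then show "integral T2 F = integral {-pi..pi} (\<lambda>y. integral {-pi..pi} (\<lambda>x. F (x, y)))"
    using integral_swap_continuous[of "-pi" "-pi" pi pi "\<lambda>x y. F (x, y)"] F by simp
qed

lemma integral_derivative_of_periodic:
  fixes g :: "real \<Rightarrow> real"
  assumes "\<And>t. (g has_real_derivative g' t) (at t)" "g pi = g (-pi)"
  shows "integral {-pi..pi} g' = 0"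
proof -
  have "(g' has_integral (g pi - g (-pi))) {-pi..pi}"
    using assms(1)
    by (intro fundamental_theorem_of_calculus)
       (auto intro: has_field_derivative_at_within simp flip: has_real_derivative_iff_has_vector_derivative)
  then show ?thesis
    using assms(2) by (simp add: integral_unique)
qed

lemma periodic_endpoints: "periodic u \<Longrightarrow> u (pi, y) = u (-pi, y) \<and> u (x, pi) = u (x, -pi)"
  unfolding periodic_def by (metis add.commute minus_add_cancel mult_2)

lemma integral_pdir_eq_0:
  assumes u: "smooth u" and per: "periodic u"
  shows "integral T2 (pdir d u) = 0"
proof (cases d)
  case True
  have "integral {-pi..pi} (\<lambda>x. pd1 u (x, y)) = 0" for y
    using periodic_endpoints[OF per]
    by (intro integral_derivative_of_periodic[of "\<lambda>t. u (t, y)"] has_real_derivative_pd1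
        smooth_differentiable u) simp
  then show ?thesis
    using True integral_T2_iterated(2)[of "pd1 u"] u
    by (simp add: pdir_def smooth_continuous_on smooth_pd1)
next
  case False
  have "integral {-pi..pi} (\<lambda>y. pd2 u (x, y)) = 0" for x
    using periodic_endpoints[OF per]
    by (intro integral_derivative_of_periodic[of "\<lambda>t. u (x, t)"] has_real_derivative_pd2
        smooth_differentiable u) simp
  then show ?thesis
    using False integral_T2_iterated(1)[of "pd2 u"] u
    by (simp add: pdir_def smooth_continuous_on smooth_pd2)
qed

text \<open>Integration by parts: \<open>pdir d (f * W\<^sup>2) = pdir d f * W\<^sup>2 + 2 * f * W * pdir d W\<close> has mean zero.\<close>

lemma integral_mult_pdir_square:
  assumes f: "smooth f" "periodic f" and W: "smooth W" "periodic W"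
  shows "integral T2 (\<lambda>z. f z * W z * pdir d W z) = - (1/2) * integral T2 (\<lambda>z. pdir d f z * W z * W z)"
proof -
  have "pdir d (\<lambda>z. f z * (W z * W z)) = (\<lambda>z. pdir d f z * W z * W z + 2 * (f z * W z * pdir d W z))"
    using f W by (simp add: pdir_mult smooth_differentiable_on algebra_simps)
  moreover have "integral T2 (pdir d (\<lambda>z. f z * (W z * W z))) = 0"
    using f W by (intro integral_pdir_eq_0 smooth_mult periodic_mult)
  moreover have "(\<lambda>z. pdir d f z * W z * W z) integrable_on T2"
    using f W by (intro integrable_on_T2 continuous_intros smooth_continuous_on smooth_pdir)
  moreover have "(\<lambda>z. f z * W z * pdir d W z) integrable_on T2"
    using f W by (intro integrable_on_T2 continuous_intros smooth_continuous_on smooth_pdir)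
  ultimately show ?thesis
    by (simp add: integral_add)
qed

lemma L2sq_nonneg: "L2sq u \<ge> 0"
  unfolding L2sq_def
  by (cases "(\<lambda>z. (u z)\<^sup>2) integrable_on T2") (auto intro: integral_nonneg simp: not_integrable_integral)

lemma le_sqrt_mult_sqrt_if_quadratic:
  fixes I a w :: real
  assumes quadratic: "\<And>t. 2 * t * I \<le> t\<^sup>2 * a + w" and "a \<ge> 0" "w \<ge> 0"
  shows "I \<le> sqrt a * sqrt w"
proof (cases "a = 0")
  case True
  have "I \<le> 0"
  proof (rule ccontr)
    assume "\<not> I \<le> 0"
    then have "2 * ((w + 1) / (2 * I)) * I = w + 1"
      by simp
    then show False
      using quadratic[of "(w + 1) / (2 * I)"] True by simp
  qed
  then show ?thesis
    using \<open>w \<ge> 0\<close> by (simp add: True)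
next
  case False
  then have "I\<^sup>2 \<le> a * w"
    using quadratic[of "I / a"] \<open>a \<ge> 0\<close> by (simp add: field_simps power2_eq_square)
  then show ?thesis
    using real_sqrt_le_mono[of "I\<^sup>2" "a * w"] by (simp add: real_sqrt_mult)
qed

lemma Cauchy_Schwarz_integral_T2:
  assumes A: "continuous_on T2 A" and W: "continuous_on T2 W"
  shows "integral T2 (\<lambda>z. \<bar>A z * W z\<bar>) \<le> sqrt (L2sq A) * sqrt (L2sq W)"
proof (rule le_sqrt_mult_sqrt_if_quadratic[OF _ L2sq_nonneg L2sq_nonneg])
  fix t :: real
  have pointwise: "2 * t * \<bar>A z * W z\<bar> \<le> t\<^sup>2 * (A z)\<^sup>2 + (W z)\<^sup>2" for z
    using zero_le_power2[of "t * \<bar>A z\<bar> - \<bar>W z\<bar>"]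
    by (simp add: power2_eq_square abs_mult algebra_simps)
  have "2 * t * integral T2 (\<lambda>z. \<bar>A z * W z\<bar>) = integral T2 (\<lambda>z. 2 * t * \<bar>A z * W z\<bar>)"
    by simp
  also have "\<dots> \<le> integral T2 (\<lambda>z. t\<^sup>2 * (A z)\<^sup>2 + (W z)\<^sup>2)"
    using A W by (intro integral_le pointwise integrable_on_T2 continuous_intros)
  also have "\<dots> = t\<^sup>2 * L2sq A + L2sq W"
    using A W unfolding L2sq_def by (simp add: integral_add integrable_on_T2 continuous_intros)
  finally show "2 * t * integral T2 (\<lambda>z. \<bar>A z * W z\<bar>) \<le> t\<^sup>2 * L2sq A + L2sq W" .
qed

section \<open>Sobolev norms and the sup-norm bound\<close>

lemma finite_index_pairs: "finite {(a, b). (a::nat) + b \<le> k}"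
  by (rule finite_subset[of _ "{..k} \<times> {..k}"]) auto

lemma card_index_pairs: "card {(a, b). (a::nat) + b \<le> k} \<le> (k + 1) * (k + 1)"
proof -
  have "card {(a, b). (a::nat) + b \<le> k} \<le> card ({..k} \<times> {..k})"
    by (rule card_mono) auto
  then show ?thesis
    by (simp add: card_cartesian_product)
qed

lemma Hsq_nonneg: "Hsq k u \<ge> 0"
  unfolding Hsq_def by (intro sum_nonneg) (auto intro: L2sq_nonneg)

lemma Hdotsq_nonneg: "Hdotsq k u \<ge> 0"
  unfolding Hdotsq_def by (intro sum_nonneg) (auto intro: L2sq_nonneg)

lemma Hnorm_nonneg: "Hnorm k u \<ge> 0"
  by (simp add: Hnorm_def Hsq_nonneg)

lemma L2sq_pdm_le_Hsq: "a + b \<le> k \<Longrightarrow> L2sq (pdm a b u) \<le> Hsq k u"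
  unfolding Hsq_def
  using member_le_sum[of "(a, b)" "{(a, b). a + b \<le> k}" "\<lambda>(a, b). L2sq (pdm a b u)"]
  by (auto simp: finite_index_pairs L2sq_nonneg)

lemma L2sq_pdm_le_Hdotsq: "a + b = k \<Longrightarrow> L2sq (pdm a b u) \<le> Hdotsq k u"
proof -
  assume "a + b = k"
  moreover have "finite {(a, b). (a::nat) + b = k}"
    by (rule finite_subset[of _ "{..k} \<times> {..k}"]) auto
  ultimately show ?thesis
    unfolding Hdotsq_def
    using member_le_sum[of "(a, b)" "{(a, b). a + b = k}" "\<lambda>(a, b). L2sq (pdm a b u)"]
    by (auto simp: L2sq_nonneg)
qed

lemma Hnorm_mono: "k \<le> k' \<Longrightarrow> Hnorm k u \<le> Hnorm k' u"
  unfolding Hnorm_def Hsq_def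
  by (intro real_sqrt_le_mono sum_mono2) (auto simp: finite_index_pairs L2sq_nonneg)

lemma L2sq_pdl_le_Hsq: "smooth u \<Longrightarrow> length ds \<le> k \<Longrightarrow> L2sq (pdl ds u) \<le> Hsq k u"
  using sum_length_filter_compl[of id ds] by (auto simp: pdl_eq_pdm intro!: L2sq_pdm_le_Hsq)

lemma Hnorm_pdl_le:
  assumes u: "smooth u"
  shows "Hnorm k (pdl ds u) \<le> (k + 1) * Hnorm (length ds + k) u"
proof -
  have "Hsq k (pdl ds u) \<le> card {(a, b). (a::nat) + b \<le> k} * Hsq (length ds + k) u"
    unfolding Hsq_def[of k]
  proof (rule sum_bounded_above, clarify)
    fix a b :: nat
    assume "a + b \<le> k"
    moreover have "pdm a b (pdl ds u) = pdl (replicate a True @ replicate b False @ ds) u"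
      using u by (simp add: pdm_eq_pdl smooth_pdl pdl_append)
    ultimately show "L2sq (pdm a b (pdl ds u)) \<le> Hsq (length ds + k) u"
      using u by (auto intro!: L2sq_pdl_le_Hsq)
  qed
  also have "\<dots> \<le> (k + 1)\<^sup>2 * Hsq (length ds + k) u"
    using card_index_pairs[of k] Hsq_nonneg[of "length ds + k" u]
    by (intro mult_right_mono) (simp_all add: power2_eq_square flip: of_nat_mult of_nat_le_iff)
  finally have "sqrt (Hsq k (pdl ds u)) \<le> sqrt ((k + 1)\<^sup>2) * sqrt (Hsq (length ds + k) u)"
    by (metis real_sqrt_le_mono real_sqrt_mult)
  then show ?thesis
    unfolding Hnorm_def by (simp add: add.commute)
qed

lemma abs_le_average_plus_integral_deriv:
  fixes \<phi> \<phi>' :: "real \<Rightarrow> real"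
  assumes \<phi>: "\<And>t. (\<phi> has_real_derivative \<phi>' t) (at t)" and \<phi>': "continuous_on UNIV \<phi>'"
    and x: "x \<in> {-pi..pi}"
  shows "\<bar>\<phi> x\<bar> \<le> integral {-pi..pi} (\<lambda>t. \<bar>\<phi> t\<bar>) / (2 * pi) + integral {-pi..pi} (\<lambda>t. \<bar>\<phi>' t\<bar>)"
proof -
  have cont_\<phi>: "continuous_on UNIV \<phi>"
    using \<phi> by (meson DERIV_isCont continuous_at_imp_continuous_on)
  have "continuous_on {-pi..pi} (\<lambda>t. \<bar>\<phi> t\<bar>)"
    by (intro continuous_intros continuous_on_subset[OF cont_\<phi>]) auto
  then obtain t0 where t0: "t0 \<in> {-pi..pi}" "\<And>t. t \<in> {-pi..pi} \<Longrightarrow> \<bar>\<phi> t0\<bar> \<le> \<bar>\<phi> t\<bar>"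
    using continuous_attains_inf[of "{-pi..pi}" "\<lambda>t. \<bar>\<phi> t\<bar>"] by auto
  have "2 * pi * \<bar>\<phi> t0\<bar> = integral {-pi..pi} (\<lambda>t. \<bar>\<phi> t0\<bar>)"
    by simp
  also have "\<dots> \<le> integral {-pi..pi} (\<lambda>t. \<bar>\<phi> t\<bar>)"
    using t0 cont_\<phi> by (intro integral_le integrable_continuous_interval continuous_intros)
      (auto intro: continuous_on_subset)
  finally have min_le_average: "\<bar>\<phi> t0\<bar> \<le> integral {-pi..pi} (\<lambda>t. \<bar>\<phi> t\<bar>) / (2 * pi)"
    by (simp add: field_simps)
  define c d where "c = min x t0" and "d = max x t0"
  have cd: "c \<le> d" "{c..d} \<subseteq> {-pi..pi}"
    using x t0 by (auto simp: c_def d_def)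
  have "(\<phi>' has_integral (\<phi> d - \<phi> c)) {c..d}"
    using \<phi> cd(1) by (intro fundamental_theorem_of_calculus)
      (auto intro: has_field_derivative_at_within simp flip: has_real_derivative_iff_has_vector_derivative)
  then have "\<bar>\<phi> d - \<phi> c\<bar> \<le> integral {c..d} (\<lambda>t. \<bar>\<phi>' t\<bar>)"
    using integral_norm_bound_integral[of \<phi>' "{c..d}" "\<lambda>t. \<bar>\<phi>' t\<bar>"] \<phi>'
    by (auto intro!: integrable_continuous_interval continuous_intros intro: continuous_on_subset
        simp: integral_unique)
  also have "\<dots> \<le> integral {-pi..pi} (\<lambda>t. \<bar>\<phi>' t\<bar>)"
    using cd(2) \<phi>' by (intro integral_subset_le integrable_continuous_interval continuous_intros)
      (auto intro: continuous_on_subset)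
  finally have "\<bar>\<phi> x - \<phi> t0\<bar> \<le> integral {-pi..pi} (\<lambda>t. \<bar>\<phi>' t\<bar>)"
    by (cases "x \<le> t0") (auto simp: c_def d_def abs_minus_commute)
  with min_le_average show ?thesis
    by linarith
qed

lemma integral_abs_le_L2:
  assumes "continuous_on T2 h"
  shows "integral T2 (\<lambda>z. \<bar>h z\<bar>) \<le> 2 * pi * sqrt (L2sq h)"
proof -
  have "L2sq (\<lambda>z. 1) = (2 * pi)\<^sup>2"
    unfolding L2sq_def T2_eq_cbox by (simp add: content_Pair power2_eq_square)
  then have "sqrt (L2sq (\<lambda>z. 1)) = 2 * pi"
    by (simp only: real_sqrt_abs) simp
  then show ?thesis
    using Cauchy_Schwarz_integral_T2[of h "\<lambda>z. 1"] assms by (simp add: mult.commute)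
qed

lemma integral_abs_pdm_le_Hnorm:
  assumes "smooth u" "a + b \<le> k"
  shows "integral T2 (\<lambda>z. \<bar>pdm a b u z\<bar>) \<le> 2 * pi * Hnorm k u"
proof -
  have "integral T2 (\<lambda>z. \<bar>pdm a b u z\<bar>) \<le> 2 * pi * sqrt (L2sq (pdm a b u))"
    using assms by (intro integral_abs_le_L2 smooth_continuous_on smooth_pdm)
  also have "\<dots> \<le> 2 * pi * Hnorm k u"
    unfolding Hnorm_def using assms by (intro mult_left_mono real_sqrt_le_mono L2sq_pdm_le_Hsq) auto
  finally show ?thesis .
qed

lemma continuous_on_slices:
  fixes F :: sfun
  assumes "continuous_on UNIV F"
  shows "continuous_on S (\<lambda>s. F (s, t))" "continuous_on S (\<lambda>t. F (s, t))"
    and "continuous_on S (\<lambda>s. integral {-pi..pi} (\<lambda>t. F (s, t)))"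
proof -
  show "continuous_on S (\<lambda>s. F (s, t))" "continuous_on S (\<lambda>t. F (s, t))"
    using assms by (auto intro!: continuous_on_compose2[of UNIV F] continuous_intros)
  show "continuous_on S (\<lambda>s. integral {-pi..pi} (\<lambda>t. F (s, t)))"
    using integral_continuous_on_param[of UNIV "-pi" pi "\<lambda>s t. F (s, t)"] assms
    by (auto simp: cbox_interval intro: continuous_on_subset)
qed

lemma integral_abs_slice_le:
  assumes h: "smooth h" and y: "y \<in> {-pi..pi}"
  shows "integral {-pi..pi} (\<lambda>s. \<bar>h (s, y)\<bar>)
    \<le> integral T2 (\<lambda>z. \<bar>h z\<bar>) / (2 * pi) + integral T2 (\<lambda>z. \<bar>pd2 h z\<bar>)"
proof -
  have h_cont: "continuous_on UNIV h" "continuous_on UNIV (pd2 h)"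
    and abs_cont: "continuous_on UNIV (\<lambda>z. \<bar>h z\<bar>)" "continuous_on UNIV (\<lambda>z. \<bar>pd2 h z\<bar>)"
    using h smooth_pd2[OF h] by (auto intro: continuous_on_rabs smooth_continuous_on)
  note slices = continuous_on_slices[OF h_cont(1)] continuous_on_slices[OF h_cont(2)]
    continuous_on_slices[OF abs_cont(1)] continuous_on_slices[OF abs_cont(2)]
  have "\<bar>h (s, y)\<bar> \<le> integral {-pi..pi} (\<lambda>t. \<bar>h (s, t)\<bar>) / (2 * pi) + integral {-pi..pi} (\<lambda>t. \<bar>pd2 h (s, t)\<bar>)"
    for s
    using h y by (intro abs_le_average_plus_integral_deriv has_real_derivative_pd2 smooth_differentiable slices)
  then have "integral {-pi..pi} (\<lambda>s. \<bar>h (s, y)\<bar>) \<le> integral {-pi..pi}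
      (\<lambda>s. integral {-pi..pi} (\<lambda>t. \<bar>h (s, t)\<bar>) / (2 * pi) + integral {-pi..pi} (\<lambda>t. \<bar>pd2 h (s, t)\<bar>))"
    by (intro integral_le integrable_continuous_interval continuous_intros slices) auto
  also have "\<dots> = integral {-pi..pi} (\<lambda>s. integral {-pi..pi} (\<lambda>t. \<bar>h (s, t)\<bar>)) / (2 * pi)
      + integral {-pi..pi} (\<lambda>s. integral {-pi..pi} (\<lambda>t. \<bar>pd2 h (s, t)\<bar>))"
    by (simp add: integral_add integrable_continuous_interval slices)
  also have "\<dots> = integral T2 (\<lambda>z. \<bar>h z\<bar>) / (2 * pi) + integral T2 (\<lambda>z. \<bar>pd2 h z\<bar>)"
    using abs_cont by (simp add: integral_T2_iterated(1) continuous_on_subset[of UNIV])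
  finally show ?thesis .
qed

lemma abs_le_Hnorm_2:
  assumes u: "smooth u" and "z \<in> T2"
  shows "\<bar>u z\<bar> \<le> 11 * Hnorm 2 u"
proof -
  obtain x y where z: "z = (x, y)" and x: "x \<in> {-pi..pi}" and y: "y \<in> {-pi..pi}"
    using \<open>z \<in> T2\<close> unfolding T2_def by auto
  define N where "N v = integral T2 (\<lambda>z. \<bar>v z\<bar>)" for v :: sfun
  define H where "H = Hnorm 2 u"
  have pdm_le_2: "pdm 0 0 u = u" "pdm 1 0 u = pd1 u" "pdm 0 1 u = pd2 u" "pdm 1 1 u = pd2 (pd1 u)"
    using u by (simp_all add: pdm_def pd1_pd2_commute)
  have "N (pdm a b u) \<le> 2 * pi * H" if "a + b \<le> 2" for a b
    unfolding N_def H_def using u that by (rule integral_abs_pdm_le_Hnorm)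
  from this[of 0 0] this[of 1 0] this[of 0 1] this[of 1 1]
  have N_le: "N u \<le> 2 * pi * H" "N (pd1 u) \<le> 2 * pi * H" "N (pd2 u) \<le> 2 * pi * H"
    "N (pd2 (pd1 u)) \<le> 2 * pi * H"
    unfolding pdm_le_2 by simp_all
  have "\<bar>u z\<bar> \<le> integral {-pi..pi} (\<lambda>s. \<bar>u (s, y)\<bar>) / (2 * pi) + integral {-pi..pi} (\<lambda>s. \<bar>pd1 u (s, y)\<bar>)"
    unfolding z using abs_le_average_plus_integral_deriv[OF has_real_derivative_pd1[OF smooth_differentiable[OF u]]
        continuous_on_slices(1)[OF smooth_continuous_on[OF smooth_pd1[OF u]]] x] .
  also have "\<dots> \<le> (N u / (2 * pi) + N (pd2 u)) / (2 * pi) + (N (pd1 u) / (2 * pi) + N (pd2 (pd1 u)))"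
    using integral_abs_slice_le[OF u y] integral_abs_slice_le[OF smooth_pd1[OF u] y]
    unfolding N_def by (intro add_mono divide_right_mono) simp_all
  also have "\<dots> \<le> (H + 2 * pi * H) / (2 * pi) + (H + 2 * pi * H)"
  proof -
    have "N u / (2 * pi) \<le> H" "N (pd1 u) / (2 * pi) \<le> H"
      using N_le by (simp_all add: divide_le_eq mult.commute)
    then show ?thesis
      using N_le by (intro add_mono divide_right_mono) simp_all
  qed
  also have "\<dots> = H / (2 * pi) + 2 * H + 2 * pi * H"
    by (simp add: field_simps)
  also have "\<dots> \<le> H + 2 * H + 8 * H"
  proof -
    have "H * 1 \<le> H * (2 * pi)" "2 * pi * H \<le> 8 * H"
      using Hnorm_nonneg[of 2 u] pi_gt3 pi_less_4 unfolding H_def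
      by (intro mult_left_mono mult_right_mono; simp)+
    then have "H / (2 * pi) \<le> H"
      by (simp add: field_simps)
    with \<open>2 * pi * H \<le> 8 * H\<close> show ?thesis
      by linarith
  qed
  finally show ?thesis
    by (simp add: H_def)
qed

lemma abs_pdl_le_Hnorm:
  assumes "smooth u" "z \<in> T2"
  shows "\<bar>pdl ds u z\<bar> \<le> 33 * Hnorm (length ds + 2) u"
proof -
  have "Hnorm 2 (pdl ds u) \<le> 3 * Hnorm (length ds + 2) u"
    using Hnorm_pdl_le[OF assms(1), of 2 ds] by simp
  then show ?thesis
    using abs_le_Hnorm_2[OF smooth_pdl[OF assms(1)] assms(2), of ds] by linarith
qed

lemma abs_integral_mult3_le:
  fixes A B W :: sfun
  assumes "continuous_on T2 A" "continuous_on T2 B" "continuous_on T2 W"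
    and B: "\<And>z. z \<in> T2 \<Longrightarrow> \<bar>B z\<bar> \<le> M" and "M \<ge> 0"
  shows "\<bar>integral T2 (\<lambda>z. A z * B z * W z)\<bar> \<le> M * (sqrt (L2sq A) * sqrt (L2sq W))"
proof -
  have "\<bar>integral T2 (\<lambda>z. A z * B z * W z)\<bar> \<le> integral T2 (\<lambda>z. M * \<bar>A z * W z\<bar>)"
  proof -
    have "(\<lambda>z. A z * B z * W z) integrable_on T2" "(\<lambda>z. M * \<bar>A z * W z\<bar>) integrable_on T2"
      using assms by (auto intro!: integrable_on_T2 continuous_intros)
    moreover have "\<bar>A z * B z * W z\<bar> \<le> M * \<bar>A z * W z\<bar>" if "z \<in> T2" for z
      using mult_right_mono[OF B[OF that], of "\<bar>A z * W z\<bar>"] by (simp add: abs_mult algebra_simps)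
    ultimately show ?thesis
      using integral_norm_bound_integral[of "\<lambda>z. A z * B z * W z" T2 "\<lambda>z. M * \<bar>A z * W z\<bar>"] by simp
  qed
  also have "\<dots> \<le> M * (sqrt (L2sq A) * sqrt (L2sq W))"
    using assms by (simp add: Cauchy_Schwarz_integral_T2 mult_left_mono)
  finally show ?thesis .
qed

section \<open>The commutator estimate\<close>

lemma Hnorm_le_Hnorm2: "Hnorm k u \<le> Hnorm2 k u v" "Hnorm k v \<le> Hnorm2 k u v"
  unfolding Hnorm_def Hnorm2_def using Hsq_nonneg[of k u] Hsq_nonneg[of k v]
  by (simp_all add: real_sqrt_le_mono)

lemma Hnorm2_nonneg: "Hnorm2 k u v \<ge> 0"
  using Hnorm_le_Hnorm2(1)[of k u v] Hnorm_nonneg[of k u] by linarith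

lemma Hnorm_pdir_le_Hnorm2: "Hnorm k (pdir d f) \<le> Hnorm2 k (pd1 f) (pd2 f)"
  by (cases d) (simp_all add: pdir_def Hnorm_le_Hnorm2)

lemma sqrt_L2sq_pdl_le_Hnorm: "smooth u \<Longrightarrow> length ds \<le> k \<Longrightarrow> sqrt (L2sq (pdl ds u)) \<le> Hnorm k u"
  unfolding Hnorm_def by (intro real_sqrt_le_mono L2sq_pdl_le_Hsq)

definition commutator_bound :: "nat \<Rightarrow> sfun \<Rightarrow> sfun \<Rightarrow> real" where
  "commutator_bound s f h =
     Hnorm2 (s div 2 + 1) (pd1 f) (pd2 f) * Hnorm (s - 1) h + Hnorm2 (s - 1) (pd1 f) (pd2 f) * Hnorm (s div 2 + 2) h"

lemma commutator_bound_nonneg: "commutator_bound s f h \<ge> 0"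
  by (simp add: commutator_bound_def Hnorm_nonneg Hnorm2_nonneg)

lemma abs_integral_pdl_mult_pdl_le:
  assumes u: "smooth u" and v: "smooth v" and W: "smooth W"
  shows "\<bar>integral T2 (\<lambda>z. pdl p u z * pdl q v z * W z)\<bar>
    \<le> 33 * Hnorm (length p) u * Hnorm (length q + 2) v * sqrt (L2sq W)"
proof -
  have "\<bar>integral T2 (\<lambda>z. pdl p u z * pdl q v z * W z)\<bar>
      \<le> 33 * Hnorm (length q + 2) v * (sqrt (L2sq (pdl p u)) * sqrt (L2sq W))"
    using u v W abs_pdl_le_Hnorm[OF v]
    by (intro abs_integral_mult3_le) (simp_all add: smooth_continuous_on smooth_pdl Hnorm_nonneg)
  also have "\<dots> \<le> 33 * Hnorm (length q + 2) v * (Hnorm (length p) u * sqrt (L2sq W))"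
    using sqrt_L2sq_pdl_le_Hnorm[OF u, of p "length p"]
    by (intro mult_left_mono mult_right_mono) (simp_all add: Hnorm_nonneg L2sq_nonneg)
  finally show ?thesis
    by (simp add: ac_simps)
qed

text \<open>Of the \<open>s\<close> derivatives, the factor of \<open>f\<close> receives \<open>p\<close> and the factor of \<open>h\<close> receives \<open>q\<close>.
  Whichever of the two gets at most half of them is estimated in sup norm (\<open>H\<^sup>2 \<subseteq> L\<^sup>\<infinity>\<close>),
  the other one in \<open>L\<^sup>2\<close>; since \<open>p \<noteq> []\<close>, the factor of \<open>f\<close> always contains a derivative of \<open>f\<close>.\<close>

lemma abs_integral_leibniz_term_le:
  assumes f: "smooth f" and h: "smooth h" and W: "smooth W" and pq: "pq \<in> set (leibniz_splits ds)"
  defines "s \<equiv> length ds"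
  shows "\<bar>integral T2 (\<lambda>z. leibniz_term f h pq z * W z)\<bar> \<le> 33 * commutator_bound s f h * sqrt (L2sq W)"
proof -
  obtain p q where pq_eq: "pq = (p, q)" by force
  with leibniz_splits_length[OF pq] obtain p' e where p: "p = p' @ [e]" and len: "length p' + 1 + length q = s"
    by (cases p rule: rev_cases) (auto simp: s_def)
  define A B where "A = pdl p' (pdir e f)" and "B = pdl q h"
  define F H where "F k = Hnorm2 k (pd1 f) (pd2 f)" and "H k = Hnorm k h" for k
  have F_ge: "Hnorm k (pdir e f) \<le> F l" and H_ge: "Hnorm k h \<le> H l" if "k \<le> l" for k l
    using Hnorm_mono[OF that, of "pdir e f"] Hnorm_pdir_le_Hnorm2[of l e f] Hnorm_mono[OF that, of h]
    by (simp_all add: F_def H_def)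
  have nonneg: "0 \<le> Hnorm k u" "0 \<le> F k" "0 \<le> H k" "0 \<le> sqrt (L2sq W)" for k u
    by (simp_all add: F_def H_def Hnorm_nonneg Hnorm2_nonneg L2sq_nonneg)
  consider (q_small) "length q \<le> s div 2" | (p_small) "length p' + 2 \<le> s div 2 + 1"
    using len by linarith
  then have bound: "\<bar>integral T2 (\<lambda>z. A z * B z * W z)\<bar>
      \<le> 33 * F (s div 2 + 1) * H (s - 1) * sqrt (L2sq W) + 33 * F (s - 1) * H (s div 2 + 2) * sqrt (L2sq W)"
  proof cases
    case q_small
    have "\<bar>integral T2 (\<lambda>z. A z * B z * W z)\<bar>
        \<le> 33 * Hnorm (length p') (pdir e f) * Hnorm (length q + 2) h * sqrt (L2sq W)"
      unfolding A_def B_def by (rule abs_integral_pdl_mult_pdl_le[OF smooth_pdir[OF f] h W])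
    also have "\<dots> \<le> 33 * F (s - 1) * H (s div 2 + 2) * sqrt (L2sq W)"
      using len q_small nonneg by (intro mult_right_mono mult_mono mult_left_mono F_ge H_ge) simp_all
    finally show ?thesis
      using nonneg by (simp add: add_increasing)
  next
    case p_small
    have "\<bar>integral T2 (\<lambda>z. B z * A z * W z)\<bar>
        \<le> 33 * Hnorm (length q) h * Hnorm (length p' + 2) (pdir e f) * sqrt (L2sq W)"
      unfolding A_def B_def by (rule abs_integral_pdl_mult_pdl_le[OF h smooth_pdir[OF f] W])
    also have "\<dots> \<le> 33 * H (s - 1) * F (s div 2 + 1) * sqrt (L2sq W)"
      using len p_small nonneg by (intro mult_right_mono mult_mono mult_left_mono F_ge H_ge) simp_all
    finally show ?thesis
      using nonneg by (simp add: ac_simps add_increasing2)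
  qed
  have "(\<lambda>z. leibniz_term f h pq z * W z) = (\<lambda>z. A z * B z * W z)"
    by (simp add: leibniz_term_def A_def B_def pq_eq p pdl_append pdl_Cons_pdir)
  with bound show ?thesis
    by (simp add: commutator_bound_def F_def H_def distrib_left distrib_right mult.assoc)
qed

lemma has_integral_sum_list:
  fixes F :: "'a \<Rightarrow> 'n::euclidean_space \<Rightarrow> real"
  assumes "\<And>x. x \<in> set xs \<Longrightarrow> F x integrable_on S"
  shows "((\<lambda>z. \<Sum>x\<leftarrow>xs. F x z) has_integral (\<Sum>x\<leftarrow>xs. integral S (F x))) S"
  using assms by (induction xs) (auto intro!: has_integral_add integrable_integral)

lemma abs_integral_leibniz_sum_le:
  assumes f: "smooth f" and h: "smooth h" and W: "smooth W"
  shows "\<bar>integral T2 (\<lambda>z. (\<Sum>pq\<leftarrow>leibniz_splits ds. leibniz_term f h pq z) * W z)\<bar>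
    \<le> 2 ^ length ds * (33 * commutator_bound (length ds) f h * sqrt (L2sq W))"
proof -
  define M where "M = 33 * commutator_bound (length ds) f h * sqrt (L2sq W)"
  have "M \<ge> 0"
    by (simp add: M_def commutator_bound_nonneg L2sq_nonneg)
  define I where "I pq = integral T2 (\<lambda>z. leibniz_term f h pq z * W z)" for pq
  have "(\<lambda>z. leibniz_term f h pq z * W z) integrable_on T2" for pq
    using f h W unfolding leibniz_term_def
    by (intro integrable_on_T2 continuous_intros smooth_continuous_on smooth_pdl)
  then have "integral T2 (\<lambda>z. \<Sum>pq\<leftarrow>leibniz_splits ds. leibniz_term f h pq z * W z)
      = (\<Sum>pq\<leftarrow>leibniz_splits ds. I pq)"
    unfolding I_def by (intro integral_unique has_integral_sum_list)
  then have "\<bar>integral T2 (\<lambda>z. (\<Sum>pq\<leftarrow>leibniz_splits ds. leibniz_term f h pq z) * W z)\<bar>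
      = \<bar>\<Sum>pq\<leftarrow>leibniz_splits ds. I pq\<bar>"
    by (simp add: sum_list_mult_const[symmetric])
  also have "\<dots> \<le> (\<Sum>pq\<leftarrow>leibniz_splits ds. \<bar>I pq\<bar>)"
    using sum_list_abs[of "map I (leibniz_splits ds)"] by (simp add: o_def)
  also have "\<dots> \<le> (\<Sum>pq\<leftarrow>leibniz_splits ds. M)"
    unfolding I_def M_def by (intro sum_list_mono abs_integral_leibniz_term_le f h W)
  also have "\<dots> \<le> 2 ^ length ds * M"
    using length_leibniz_splits[of ds] \<open>M \<ge> 0\<close>
    by (simp add: sum_list_triv mult_right_mono flip: of_nat_le_iff)
  finally show ?thesis
    by (simp add: M_def)
qed

lemma continuous_on_leibniz_sum:
  assumes "smooth u" "smooth v"
  shows "continuous_on S (\<lambda>z. \<Sum>pq\<leftarrow>leibniz_splits ds. leibniz_term u v pq z)"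
  using differentiable_on_sum_list[of "leibniz_splits ds" "leibniz_term u v" UNIV]
    leibniz_term_differentiable_on[OF assms]
  by (meson continuous_on_subset differentiable_imp_continuous_on subset_UNIV)

lemma abs_integral_transport_le:
  assumes f1: "smooth f1" "periodic f1" and f2: "smooth f2" "periodic f2" and W: "smooth W" "periodic W"
  shows "\<bar>integral T2 (\<lambda>z. f1 z * W z * pd1 W z + f2 z * W z * pd2 W z)\<bar>
    \<le> 11 / 2 * Hnorm 2 (\<lambda>z. pd1 f1 z + pd2 f2 z) * L2sq W"
proof -
  define D where "D = (\<lambda>z. pd1 f1 z + pd2 f2 z)"
  have D: "smooth D"
    unfolding D_def using f1 f2 by (intro smooth_add smooth_pd1 smooth_pd2)
  have "integral T2 (\<lambda>z. f1 z * W z * pd1 W z + f2 z * W z * pd2 W z)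
      = - (1/2) * integral T2 (\<lambda>z. pd1 f1 z * W z * W z) - (1/2) * integral T2 (\<lambda>z. pd2 f2 z * W z * W z)"
    using integral_mult_pdir_square[OF f1 W, of True] integral_mult_pdir_square[OF f2 W, of False]
      f1 f2 W
    by (simp add: pdir_def integral_add integrable_on_T2 continuous_intros smooth_continuous_on smooth_pd1
        smooth_pd2)
  also have "\<dots> = - (1/2) * integral T2 (\<lambda>z. W z * D z * W z)"
    using f1 f2 W
    by (simp add: D_def distrib_left distrib_right integral_add integrable_on_T2 continuous_intros
        smooth_continuous_on smooth_pd1 smooth_pd2 ac_simps)
  finally have "\<bar>integral T2 (\<lambda>z. f1 z * W z * pd1 W z + f2 z * W z * pd2 W z)\<bar>
      = 1/2 * \<bar>integral T2 (\<lambda>z. W z * D z * W z)\<bar>"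
    by simp
  also have "\<dots> \<le> 1/2 * (11 * Hnorm 2 D * (sqrt (L2sq W) * sqrt (L2sq W)))"
    using W D abs_le_Hnorm_2[OF D]
    by (intro mult_left_mono abs_integral_mult3_le smooth_continuous_on) (simp_all add: Hnorm_nonneg)
  finally show ?thesis
    by (simp add: L2sq_nonneg D_def)
qed

lemma pdm_advect:
  fixes a b :: nat
  assumes f1: "smooth f1" and f2: "smooth f2" and g: "smooth g"
  defines "ds \<equiv> replicate a True @ replicate b False"
  shows "pdm a b (advect f1 f2 g) = (\<lambda>z. f1 z * pd1 (pdm a b g) z + f2 z * pd2 (pdm a b g) z
     + (\<Sum>pq\<leftarrow>leibniz_splits ds. leibniz_term f1 (pd1 g) pq z)
     + (\<Sum>pq\<leftarrow>leibniz_splits ds. leibniz_term f2 (pd2 g) pq z))"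
proof -
  have smooth_terms: "smooth (\<lambda>z. f1 z * pd1 g z)" "smooth (\<lambda>z. f2 z * pd2 g z)"
    using f1 f2 g by (simp_all add: smooth_mult smooth_pd1 smooth_pd2)
  then have "pdm a b (advect f1 f2 g) = pdl ds (\<lambda>z. f1 z * pd1 g z + f2 z * pd2 g z)"
    by (simp add: pdm_eq_pdl smooth_add advect_def ds_def)
  also have "\<dots> = (\<lambda>z. pdl ds (\<lambda>z. f1 z * pd1 g z) z + pdl ds (\<lambda>z. f2 z * pd2 g z) z)"
    using smooth_terms by (rule pdl_add)
  also have "\<dots> = (\<lambda>z. f1 z * pd1 (pdm a b g) z + f2 z * pd2 (pdm a b g) z
     + (\<Sum>pq\<leftarrow>leibniz_splits ds. leibniz_term f1 (pd1 g) pq z)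
     + (\<Sum>pq\<leftarrow>leibniz_splits ds. leibniz_term f2 (pd2 g) pq z))"
    using pdl_pdir_commute[OF g, of ds True] pdl_pdir_commute[OF g, of ds False] f1 f2 g
    by (simp add: pdl_mult smooth_pd1 smooth_pd2 pdm_eq_pdl ds_def pdir_def add_ac)
  finally show ?thesis .
qed

lemma abs_integral_pdm_advect_le:
  fixes a b :: nat
  assumes f1: "smooth f1" "periodic f1" and f2: "smooth f2" "periodic f2" and g: "smooth g" "periodic g"
  defines "W \<equiv> pdm a b g"
  shows "\<bar>integral T2 (\<lambda>z. pdm a b (advect f1 f2 g) z * W z)\<bar>
    \<le> 11 / 2 * Hnorm 2 (\<lambda>z. pd1 f1 z + pd2 f2 z) * L2sq W
      + 2 ^ (a + b) * 33 * (commutator_bound (a + b) f1 (pd1 g) + commutator_bound (a + b) f2 (pd2 g))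
        * sqrt (L2sq W)"
proof -
  define ds where "ds = replicate a True @ replicate b False"
  define S1 S2 where "S1 z = (\<Sum>pq\<leftarrow>leibniz_splits ds. leibniz_term f1 (pd1 g) pq z) * W z"
    and "S2 z = (\<Sum>pq\<leftarrow>leibniz_splits ds. leibniz_term f2 (pd2 g) pq z) * W z" for z
  have W_sp: "smooth W" "periodic W"
    using g by (simp_all add: W_def smooth_pdm) (simp add: pdm_eq_pdl periodic_pdl)
  have "(\<lambda>z. pdm a b (advect f1 f2 g) z * W z) = (\<lambda>z. (f1 z * W z * pd1 W z + f2 z * W z * pd2 W z) + S1 z + S2 z)"
    unfolding pdm_advect[OF f1(1) f2(1) g(1)] S1_def S2_def ds_def W_def by (simp add: algebra_simps)
  moreover have "(\<lambda>z. f1 z * W z * pd1 W z + f2 z * W z * pd2 W z) integrable_on T2"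
    using f1 f2 W_sp by (intro integrable_on_T2 continuous_intros smooth_continuous_on smooth_pd1 smooth_pd2)
  moreover have "S1 integrable_on T2" "S2 integrable_on T2"
    unfolding S1_def S2_def
    using continuous_on_leibniz_sum[OF f1(1) smooth_pd1[OF g(1)]]
      continuous_on_leibniz_sum[OF f2(1) smooth_pd2[OF g(1)]] smooth_continuous_on[OF W_sp(1)]
    by (intro integrable_on_T2 continuous_on_mult; blast)+
  ultimately have "\<bar>integral T2 (\<lambda>z. pdm a b (advect f1 f2 g) z * W z)\<bar>
      \<le> \<bar>integral T2 (\<lambda>z. f1 z * W z * pd1 W z + f2 z * W z * pd2 W z)\<bar>
        + \<bar>integral T2 S1\<bar> + \<bar>integral T2 S2\<bar>"
    by (simp add: integral_add integrable_add del: integral_mult_right)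
  also have "\<dots> \<le> 11 / 2 * Hnorm 2 (\<lambda>z. pd1 f1 z + pd2 f2 z) * L2sq W
      + 2 ^ (a + b) * (33 * commutator_bound (a + b) f1 (pd1 g) * sqrt (L2sq W))
      + 2 ^ (a + b) * (33 * commutator_bound (a + b) f2 (pd2 g) * sqrt (L2sq W))"
    using abs_integral_transport_le[OF f1 f2 W_sp]
      abs_integral_leibniz_sum_le[OF f1(1) smooth_pd1[OF g(1)] W_sp(1), of ds]
      abs_integral_leibniz_sum_le[OF f2(1) smooth_pd2[OF g(1)] W_sp(1), of ds]
    unfolding S1_def S2_def by (simp add: ds_def)
  finally show ?thesis
    by (simp add: algebra_simps)
qed

definition commutator_bound_pair :: "nat \<Rightarrow> sfun \<Rightarrow> sfun \<Rightarrow> sfun \<Rightarrow> real" where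
  "commutator_bound_pair s f h1 h2 =
     Hnorm2 (s div 2 + 1) (pd1 f) (pd2 f) * Hnorm2 (s - 1) h1 h2
     + Hnorm2 (s - 1) (pd1 f) (pd2 f) * Hnorm2 (s div 2 + 2) h1 h2"

lemma commutator_bound_pair_nonneg: "commutator_bound_pair s f h1 h2 \<ge> 0"
  by (simp add: commutator_bound_pair_def Hnorm2_nonneg)

lemma commutator_bound_le_pair:
  "commutator_bound s f h1 \<le> commutator_bound_pair s f h1 h2"
  "commutator_bound s f h2 \<le> commutator_bound_pair s f h1 h2"
  unfolding commutator_bound_def commutator_bound_pair_def
  by (intro add_mono mult_left_mono Hnorm_le_Hnorm2 Hnorm2_nonneg)+

lemma smooth_advect: "smooth f1 \<Longrightarrow> smooth f2 \<Longrightarrow> smooth g \<Longrightarrow> smooth (advect f1 f2 g)"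
  unfolding advect_def by (intro smooth_add smooth_mult smooth_pd1 smooth_pd2)

lemma L2sq_pdm_le_Hdotnorm2:
  assumes "a + b = k"
  shows "L2sq (pdm a b u) + L2sq (pdm a b v) \<le> (Hdotnorm2 k u v)\<^sup>2"
    and "sqrt (L2sq (pdm a b u)) \<le> Hdotnorm2 k u v" "sqrt (L2sq (pdm a b v)) \<le> Hdotnorm2 k u v"
proof -
  show "L2sq (pdm a b u) + L2sq (pdm a b v) \<le> (Hdotnorm2 k u v)\<^sup>2"
    using L2sq_pdm_le_Hdotsq[OF assms, of u] L2sq_pdm_le_Hdotsq[OF assms, of v]
    by (simp add: Hdotnorm2_def Hdotsq_nonneg)
  then show "sqrt (L2sq (pdm a b u)) \<le> Hdotnorm2 k u v" "sqrt (L2sq (pdm a b v)) \<le> Hdotnorm2 k u v"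
    using L2sq_nonneg[of "pdm a b u"] L2sq_nonneg[of "pdm a b v"]
    by (simp_all add: Hdotnorm2_def Hdotsq_nonneg real_le_rsqrt)
qed

lemma Hdotnorm2_nonneg: "Hdotnorm2 k u v \<ge> 0"
  by (simp add: Hdotnorm2_def Hdotsq_nonneg)

lemma abs_integral_energy_le:
  fixes a b :: nat
  assumes f: "smooth f1" "periodic f1" "smooth f2" "periodic f2"
    and g: "smooth g1" "periodic g1" "smooth g2" "periodic g2"
  defines "Hd \<equiv> Hdotnorm2 (a + b) g1 g2"
    and "K \<equiv> commutator_bound_pair (a + b) f1 (pd1 g1) (pd1 g2) + commutator_bound_pair (a + b) f2 (pd2 g1) (pd2 g2)"
  shows "\<bar>integral T2 (\<lambda>z. pdm a b (advect f1 f2 g1) z * pdm a b g1 z + pdm a b (advect f1 f2 g2) z * pdm a b g2 z)\<bar>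
    \<le> 11 / 2 * Hnorm 2 (\<lambda>z. pd1 f1 z + pd2 f2 z) * Hd\<^sup>2 + 2 ^ (a + b) * 66 * K * Hd"
proof -
  define D where "D = Hnorm 2 (\<lambda>z. pd1 f1 z + pd2 f2 z)"
  define I where "I g = integral T2 (\<lambda>z. pdm a b (advect f1 f2 g) z * pdm a b g z)" for g
  have component: "\<bar>I g\<bar> \<le> 11 / 2 * D * L2sq (pdm a b g) + 2 ^ (a + b) * 33 * K * Hd"
    if "smooth g" "periodic g" "sqrt (L2sq (pdm a b g)) \<le> Hd"
      and "commutator_bound (a + b) f1 (pd1 g) + commutator_bound (a + b) f2 (pd2 g) \<le> K" for g
  proof -
    have "K \<ge> 0"
      using that(4) commutator_bound_nonneg[of "a + b"] by (meson add_nonneg_nonneg order_trans)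
    then have "2 ^ (a + b) * 33 * (commutator_bound (a + b) f1 (pd1 g) + commutator_bound (a + b) f2 (pd2 g))
        * sqrt (L2sq (pdm a b g)) \<le> 2 ^ (a + b) * 33 * K * Hd"
      using that(3,4) by (intro mult_mono mult_left_mono add_nonneg_nonneg commutator_bound_nonneg)
        (simp_all add: L2sq_nonneg)
    then show ?thesis
      using abs_integral_pdm_advect_le[OF f that(1,2), of a b] unfolding I_def D_def by linarith
  qed
  have "integral T2 (\<lambda>z. pdm a b (advect f1 f2 g1) z * pdm a b g1 z + pdm a b (advect f1 f2 g2) z * pdm a b g2 z)
      = I g1 + I g2"
    unfolding I_def using f g
    by (intro integral_add integrable_on_T2 continuous_intros smooth_continuous_on smooth_pdm smooth_advect)
  also have "\<bar>\<dots>\<bar> \<le> 11 / 2 * D * (L2sq (pdm a b g1) + L2sq (pdm a b g2)) + 2 ^ (a + b) * 66 * K * Hd"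
  proof -
    have "commutator_bound (a + b) f1 (pd1 g1) + commutator_bound (a + b) f2 (pd2 g1) \<le> K"
      "commutator_bound (a + b) f1 (pd1 g2) + commutator_bound (a + b) f2 (pd2 g2) \<le> K"
      unfolding K_def by (intro add_mono commutator_bound_le_pair)+
    moreover have "sqrt (L2sq (pdm a b g1)) \<le> Hd" "sqrt (L2sq (pdm a b g2)) \<le> Hd"
      unfolding Hd_def by (simp_all add: L2sq_pdm_le_Hdotnorm2)
    ultimately show ?thesis
      using component[OF g(1,2)] component[OF g(3,4)] abs_triangle_ineq[of "I g1" "I g2"]
      by (simp add: distrib_left)
  qed
  also have "\<dots> \<le> 11 / 2 * D * Hd\<^sup>2 + 2 ^ (a + b) * 66 * K * Hd"
    using L2sq_pdm_le_Hdotnorm2(1)[of a b "a + b" g1 g2] Hnorm_nonneg[of 2]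
    unfolding Hd_def D_def by (intro add_right_mono mult_left_mono) simp_all
  finally show ?thesis
    by (simp add: D_def)
qed

theorem lemma2p2:
  fixes s0 :: nat
  assumes "s0 \<ge> 1"
  shows "\<exists>C. \<forall>f1 f2 g1 g2 a b.
    smooth_periodic f1 \<and> smooth_periodic f2 \<and> smooth_periodic g1 \<and> smooth_periodic g2 \<and>
    a + b = s0 \<longrightarrow>
    \<bar>integral T2 (\<lambda>z. pdm a b (advect f1 f2 g1) z * pdm a b g1 z
                       + pdm a b (advect f1 f2 g2) z * pdm a b g2 z)\<bar>
    \<le> C * ( (Hnorm2 (s0 div 2 + 1) (pd1 f1) (pd2 f1) * Hnorm2 (s0 - 1) (pd1 g1) (pd1 g2)
              + Hnorm2 (s0 div 2 + 1) (pd1 f2) (pd2 f2) * Hnorm2 (s0 - 1) (pd2 g1) (pd2 g2))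
              * Hdotnorm2 s0 g1 g2
            + (Hnorm2 (s0 - 1) (pd1 f1) (pd2 f1) * Hnorm2 (s0 div 2 + 2) (pd1 g1) (pd1 g2)
              + Hnorm2 (s0 - 1) (pd1 f2) (pd2 f2) * Hnorm2 (s0 div 2 + 2) (pd2 g1) (pd2 g2))
              * Hdotnorm2 s0 g1 g2
            + Hnorm 2 (\<lambda>z. pd1 f1 z + pd2 f2 z) * (Hdotnorm2 s0 g1 g2)\<^sup>2 )"
proof (rule exI[of _ "66 * 2 ^ s0 + 6"], intro allI impI, goal_cases)
  case (1 f1 f2 g1 g2 a b)
  define Hd D K where "Hd = Hdotnorm2 s0 g1 g2" and "D = Hnorm 2 (\<lambda>z. pd1 f1 z + pd2 f2 z)"
    and "K = commutator_bound_pair s0 f1 (pd1 g1) (pd1 g2) + commutator_bound_pair s0 f2 (pd2 g1) (pd2 g2)"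
  have nonneg: "K * Hd \<ge> 0" "D * Hd\<^sup>2 \<ge> 0"
    by (simp_all add: Hd_def D_def K_def Hdotnorm2_nonneg Hnorm_nonneg commutator_bound_pair_nonneg)
  have "\<bar>integral T2 (\<lambda>z. pdm a b (advect f1 f2 g1) z * pdm a b g1 z + pdm a b (advect f1 f2 g2) z * pdm a b g2 z)\<bar>
      \<le> 11 / 2 * D * Hd\<^sup>2 + 2 ^ s0 * 66 * K * Hd"
    using abs_integral_energy_le[of f1 f2 g1 g2 a b] 1 by (simp add: smooth_periodic_iff Hd_def D_def K_def)
  also have "\<dots> \<le> (66 * 2 ^ s0 + 6) * (K * Hd + D * Hd\<^sup>2)"
    using nonneg mult_left_mono[OF nonneg(2), of "2 ^ s0"] by (simp add: algebra_simps)
  also have "K * Hd + D * Hd\<^sup>2 = (Hnorm2 (s0 div 2 + 1) (pd1 f1) (pd2 f1) * Hnorm2 (s0 - 1) (pd1 g1) (pd1 g2)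
              + Hnorm2 (s0 div 2 + 1) (pd1 f2) (pd2 f2) * Hnorm2 (s0 - 1) (pd2 g1) (pd2 g2)) * Hd
            + (Hnorm2 (s0 - 1) (pd1 f1) (pd2 f1) * Hnorm2 (s0 div 2 + 2) (pd1 g1) (pd1 g2)
              + Hnorm2 (s0 - 1) (pd1 f2) (pd2 f2) * Hnorm2 (s0 div 2 + 2) (pd2 g1) (pd2 g2)) * Hd
            + D * Hd\<^sup>2"
    by (simp add: K_def commutator_bound_pair_def algebra_simps)
  finally show ?case
    unfolding Hd_def D_def .
qed

end
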